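(* Let $V$ be a closed subspace of $\mathbb L^2$ and let $A_1,\dots,A_d$ be pairwise commuting bounded linear operators from $V$ to $V$; write $A^{\mathbf i}:=A_1^{i_1}\cdots A_d^{i_d}$ for $\mathbf i\in\mathbb N^d$. Let $F\in V$ be such that $$\sup_{\mathbf n\in\mathbb N^d}\Big\|\sum_{\mathbf 0\preccurlyeq\mathbf i\preccurlyeq\mathbf n}A^{\mathbf i}F\Big\|<+\infty.$$ Then there exists $h\in V$ such that $F=\prod_{q=1}^d(\mathrm I-A_q)h$.
   Context: $\mathbb L^2$ is the space of square integrable functions on a probability space, $\|\cdot\|$ its norm; $\mathbb N=\{0,1,2,\dots\}$; $\preccurlyeq$ is the coordinatewise order on $\mathbb N^d$; $\mathbf 0=(0,\dots,0)$; $\mathrm I$ is the identity and products of operators are compositions. *)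

theory Defs
  imports "HOL-Probability.Probability"
begin

text \<open>Real L^2 of a probability space M, represented by functions; equality in L^2 is
  equality almost everywhere.\<close>

definition memL2 :: "'a measure \<Rightarrow> ('a \<Rightarrow> real) \<Rightarrow> bool" where
  "memL2 M f \<longleftrightarrow> f \<in> borel_measurable M \<and> integrable M (\<lambda>x. (f x)\<^sup>2)"

definition L2norm :: "'a measure \<Rightarrow> ('a \<Rightarrow> real) \<Rightarrow> real" where
  "L2norm M f = sqrt (\<integral>x. (f x)\<^sup>2 \<partial>M)"

definition ae_eq :: "'a measure \<Rightarrow> ('a \<Rightarrow> real) \<Rightarrow> ('a \<Rightarrow> real) \<Rightarrow> bool" where
  "ae_eq M f g \<longleftrightarrow> (AE x in M. f x = g x)"

text \<open>A closed linear subspace of L^2 (as a set of representatives, closed under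
  a.e. equality).\<close>
definition closed_L2_subspace :: "'a measure \<Rightarrow> ('a \<Rightarrow> real) set \<Rightarrow> bool" where
  "closed_L2_subspace M V \<longleftrightarrow>
     (\<forall>f\<in>V. memL2 M f) \<and> (\<lambda>x. 0) \<in> V \<and>
     (\<forall>f\<in>V. \<forall>g\<in>V. (\<lambda>x. f x + g x) \<in> V) \<and>
     (\<forall>c::real. \<forall>f\<in>V. (\<lambda>x. c * f x) \<in> V) \<and>
     (\<forall>f\<in>V. \<forall>g. memL2 M g \<and> ae_eq M f g \<longrightarrow> g \<in> V) \<and>
     (\<forall>u f. (\<forall>n. u n \<in> V) \<and> memL2 M f \<and>
            (\<lambda>n. L2norm M (\<lambda>x. u n x - f x)) \<longlonglongrightarrow> 0 \<longrightarrow> f \<in> V)"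

definition bounded_linear_op_on ::
  "'a measure \<Rightarrow> ('a \<Rightarrow> real) set \<Rightarrow> (('a \<Rightarrow> real) \<Rightarrow> ('a \<Rightarrow> real)) \<Rightarrow> bool" where
  "bounded_linear_op_on M V T \<longleftrightarrow>
     (\<forall>f\<in>V. T f \<in> V) \<and>
     (\<forall>f\<in>V. \<forall>g\<in>V. ae_eq M (T (\<lambda>x. f x + g x)) (\<lambda>x. T f x + T g x)) \<and>
     (\<forall>c::real. \<forall>f\<in>V. ae_eq M (T (\<lambda>x. c * f x)) (\<lambda>x. c * T f x)) \<and>
     (\<exists>C. \<forall>f\<in>V. L2norm M (T f) \<le> C * L2norm M f)"

text \<open>A^i = A_0^(i 0) \<circ> ... \<circ> A_(d-1)^(i (d-1)) (indices 0..d-1).\<close>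
fun mpow :: "(nat \<Rightarrow> ('b \<Rightarrow> 'b)) \<Rightarrow> nat \<Rightarrow> (nat \<Rightarrow> nat) \<Rightarrow> 'b \<Rightarrow> 'b" where
  "mpow A 0 i = id"
| "mpow A (Suc d) i = mpow A d i \<circ> (A d ^^ i d)"

fun prod_I_minus :: "(nat \<Rightarrow> (('a \<Rightarrow> real) \<Rightarrow> ('a \<Rightarrow> real))) \<Rightarrow> nat \<Rightarrow> ('a \<Rightarrow> real) \<Rightarrow> ('a \<Rightarrow> real)" where
  "prod_I_minus A 0 = id"
| "prod_I_minus A (Suc d) = prod_I_minus A d \<circ> (\<lambda>f x. f x - A d f x)"

end

theory Submission
  imports Defs
begin

text \<open>For a single operator \<open>A\<close> the partial sums \<open>G m = (\<Sum>k\<le>m. A^k F)\<close> are bounded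
  by some \<open>B\<close>, and their Cesaro means \<open>h = (1/K) (\<Sum>m<K. G m)\<close> satisfy
  \<open>(I - A) h = F - (G K - F) / K\<close>; so \<open>F\<close> is approximated by \<open>(I - A) h\<close> with \<open>\<parallel>h\<parallel> \<le> B\<close>.
  Applying this to one coordinate at a time (the sums over the other coordinates of \<open>G m\<close>
  are again bounded by \<open>B\<close>, and commutativity lets \<open>I - A\<^sub>d\<close> pass through the product of the
  other factors) gives approximate solutions of \<open>\<Prod>q. (I - A\<^sub>q) h = F\<close> of norm at most \<open>B\<close>.
  In a Hilbert space this suffices: among the approximate solutions with residual at most
  \<open>1/(k+1)\<close>, those of almost minimal norm form a Cauchy sequence by the parallelogram law,
  and its limit is an exact solution.\<close>

section \<open>Square-integrable functions\<close>

lemma abs_mult_le_sum_squares: "\<bar>a * b\<bar> \<le> a\<^sup>2 + (b::real)\<^sup>2"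
proof -
  have "2 * \<bar>a\<bar> * \<bar>b\<bar> \<le> a\<^sup>2 + b\<^sup>2" "0 \<le> \<bar>a\<bar> * \<bar>b\<bar>"
    using sum_squares_bound[of "\<bar>a\<bar>" "\<bar>b\<bar>"] by simp_all
  then show ?thesis unfolding abs_mult by linarith
qed

lemma discriminant_le_of_nonneg_quadratic:
  fixes a b c :: real
  assumes nonneg: "\<And>t. 0 \<le> a + 2 * t * b + t\<^sup>2 * c" and "0 \<le> c"
  shows "b\<^sup>2 \<le> a * c"
proof (cases "c = 0")
  case True
  have "0 \<le> a + 2 * (- (a + 1) / (2 * b)) * b" if "b \<noteq> 0"
    using nonneg[of "- (a + 1) / (2 * b)"] True by simp
  then show ?thesis
    using True by (cases "b = 0") (auto simp: field_simps)
next
  case False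
  with \<open>0 \<le> c\<close> have c: "c > 0" by simp
  have "0 \<le> a + 2 * (- b / c) * b + (- b / c)\<^sup>2 * c" by (rule nonneg)
  then show ?thesis using c by (simp add: power2_eq_square field_simps)
qed

lemma memL2_borel [measurable_dest]: "memL2 M f \<Longrightarrow> f \<in> borel_measurable M"
  by (simp add: memL2_def)

lemma memL2_zero: "memL2 M (\<lambda>x. 0)"
  by (simp add: memL2_def)

lemma memL2_const: "prob_space M \<Longrightarrow> memL2 M (\<lambda>x. c)"
  by (simp add: memL2_def prob_space.finite_measure finite_measure.integrable_const)

lemma memL2_cmult: "memL2 M f \<Longrightarrow> memL2 M (\<lambda>x. c * f x)"
  unfolding memL2_def by (auto simp: power_mult_distrib)

lemma integrable_mult_memL2:
  assumes "memL2 M f" "memL2 M g"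
  shows "integrable M (\<lambda>x. f x * g x)"
proof (rule Bochner_Integration.integrable_bound)
  show "integrable M (\<lambda>x. (f x)\<^sup>2 + (g x)\<^sup>2)"
    using assms by (simp add: memL2_def)
  show "AE x in M. norm (f x * g x) \<le> norm ((f x)\<^sup>2 + (g x)\<^sup>2)"
    using abs_mult_le_sum_squares by simp
qed (use assms in measurable)

lemma memL2_add:
  assumes f: "memL2 M f" and g: "memL2 M g"
  shows "memL2 M (\<lambda>x. f x + g x)"
proof -
  have "integrable M (\<lambda>x. (f x)\<^sup>2 + 2 * (f x * g x) + (g x)\<^sup>2)"
    using f g integrable_mult_memL2[OF f g] by (simp add: memL2_def)
  moreover have "(\<lambda>x. (f x + g x)\<^sup>2) = (\<lambda>x. (f x)\<^sup>2 + 2 * (f x * g x) + (g x)\<^sup>2)"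
    by (simp add: fun_eq_iff power2_sum)
  ultimately show ?thesis
    using f g by (auto simp: memL2_def intro!: borel_measurable_add)
qed

lemma memL2_diff: "memL2 M f \<Longrightarrow> memL2 M g \<Longrightarrow> memL2 M (\<lambda>x. f x - g x)"
  using memL2_add[of M f "\<lambda>x. (-1) * g x"] memL2_cmult[of M g "-1"] by simp

lemma memL2_sum:
  "finite I \<Longrightarrow> (\<And>i. i \<in> I \<Longrightarrow> memL2 M (f i)) \<Longrightarrow> memL2 M (\<lambda>x. \<Sum>i\<in>I. f i x)"
  by (induction I rule: finite_induct) (auto intro: memL2_add memL2_zero)

lemma L2norm_nonneg: "0 \<le> L2norm M f"
  by (simp add: L2norm_def)

lemma L2norm_power2: "(L2norm M f)\<^sup>2 = (\<integral>x. (f x)\<^sup>2 \<partial>M)"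
  by (simp add: L2norm_def)

lemma L2norm_zero: "L2norm M (\<lambda>x. 0) = 0"
  by (simp add: L2norm_def)

lemma L2norm_cmult: "L2norm M (\<lambda>x. c * f x) = \<bar>c\<bar> * L2norm M f"
  by (simp add: L2norm_def power_mult_distrib real_sqrt_mult)

lemma L2norm_minus: "L2norm M (\<lambda>x. - f x) = L2norm M f"
  by (simp add: L2norm_def)

lemma L2norm_diff_commute: "L2norm M (\<lambda>x. f x - g x) = L2norm M (\<lambda>x. g x - f x)"
  by (simp add: L2norm_def power2_commute)

lemma L2norm_cong_ae:
  assumes "memL2 M f" "memL2 M g" "ae_eq M f g"
  shows "L2norm M f = L2norm M g"
proof -
  have "(\<integral>x. (f x)\<^sup>2 \<partial>M) = (\<integral>x. (g x)\<^sup>2 \<partial>M)"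
    using assms by (intro integral_cong_AE) (auto simp: ae_eq_def elim: eventually_mono)
  then show ?thesis by (simp add: L2norm_def)
qed

lemma ae_eq_zero_if_L2norm_eq_0:
  assumes "memL2 M f" "L2norm M f = 0"
  shows "ae_eq M f (\<lambda>x. 0)"
proof -
  have "(\<integral>x. (f x)\<^sup>2 \<partial>M) = 0"
    using assms(2) L2norm_power2[of M f] by simp
  then have "AE x in M. (f x)\<^sup>2 = 0"
    using integral_nonneg_eq_0_iff_AE[of M "\<lambda>x. (f x)\<^sup>2"] assms(1) by (simp add: memL2_def)
  then show ?thesis by (simp add: ae_eq_def)
qed

lemma L2_Cauchy_Schwarz:
  assumes f: "memL2 M f" and g: "memL2 M g"
  shows "\<bar>\<integral>x. f x * g x \<partial>M\<bar> \<le> L2norm M f * L2norm M g"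
proof -
  define a b c where "a = (\<integral>x. (f x)\<^sup>2 \<partial>M)" and "b = (\<integral>x. f x * g x \<partial>M)"
    and "c = (\<integral>x. (g x)\<^sup>2 \<partial>M)"
  have "0 \<le> a + 2 * t * b + t\<^sup>2 * c" for t
  proof -
    have "(\<integral>x. (f x + t * g x)\<^sup>2 \<partial>M)
        = (\<integral>x. (f x)\<^sup>2 + (2 * t) * (f x * g x) + t\<^sup>2 * (g x)\<^sup>2 \<partial>M)"
      by (rule Bochner_Integration.integral_cong) (auto simp: power2_eq_square algebra_simps)
    also have "\<dots> = a + 2 * t * b + t\<^sup>2 * c"
      using f g integrable_mult_memL2[OF f g] by (simp add: a_def b_def c_def memL2_def)
    finally show ?thesis
      using Bochner_Integration.integral_nonneg[of M "\<lambda>x. (f x + t * g x)\<^sup>2"] by simp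
  qed
  then have "b\<^sup>2 \<le> a * c"
    by (rule discriminant_le_of_nonneg_quadratic) (simp add: c_def)
  then have "sqrt (b\<^sup>2) \<le> sqrt (a * c)" by (rule real_sqrt_le_mono)
  then show ?thesis by (simp add: L2norm_def a_def b_def c_def real_sqrt_mult)
qed

lemma L2norm_triangle:
  assumes f: "memL2 M f" and g: "memL2 M g"
  shows "L2norm M (\<lambda>x. f x + g x) \<le> L2norm M f + L2norm M g"
proof -
  have "(\<integral>x. (f x + g x)\<^sup>2 \<partial>M) = (\<integral>x. (f x)\<^sup>2 + 2 * (f x * g x) + (g x)\<^sup>2 \<partial>M)"
    by (rule Bochner_Integration.integral_cong) (auto simp: power2_eq_square algebra_simps)
  also have "\<dots> = (\<integral>x. (f x)\<^sup>2 \<partial>M) + 2 * (\<integral>x. f x * g x \<partial>M) + (\<integral>x. (g x)\<^sup>2 \<partial>M)"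
    using f g integrable_mult_memL2[OF f g] by (simp add: memL2_def)
  also have "\<dots> \<le> (L2norm M f)\<^sup>2 + 2 * (L2norm M f * L2norm M g) + (L2norm M g)\<^sup>2"
    using L2_Cauchy_Schwarz[OF f g] by (simp add: L2norm_power2)
  also have "\<dots> = (L2norm M f + L2norm M g)\<^sup>2"
    by (simp add: power2_sum)
  finally have "(L2norm M (\<lambda>x. f x + g x))\<^sup>2 \<le> (L2norm M f + L2norm M g)\<^sup>2"
    by (simp only: L2norm_power2)
  then show ?thesis
    using L2norm_nonneg[of M f] L2norm_nonneg[of M g] by (meson add_nonneg_nonneg power2_le_imp_le)
qed

lemma L2norm_diff_le:
  "memL2 M f \<Longrightarrow> memL2 M g \<Longrightarrow> L2norm M (\<lambda>x. f x - g x) \<le> L2norm M f + L2norm M g"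
  using L2norm_triangle[of M f "\<lambda>x. (-1) * g x"] memL2_cmult[of M g "-1"]
  by (simp add: L2norm_minus)

lemma L2norm_dist_triangle:
  "memL2 M f \<Longrightarrow> memL2 M g \<Longrightarrow> memL2 M h \<Longrightarrow>
    L2norm M (\<lambda>x. f x - h x) \<le> L2norm M (\<lambda>x. f x - g x) + L2norm M (\<lambda>x. g x - h x)"
  using L2norm_triangle[of M "\<lambda>x. f x - g x" "\<lambda>x. g x - h x"] by (simp add: memL2_diff)

lemma L2norm_sum_le:
  "finite I \<Longrightarrow> (\<And>i. i \<in> I \<Longrightarrow> memL2 M (f i)) \<Longrightarrow>
    L2norm M (\<lambda>x. \<Sum>i\<in>I. f i x) \<le> (\<Sum>i\<in>I. L2norm M (f i))"
proof (induction I rule: finite_induct)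
  case (insert j I)
  have "L2norm M (\<lambda>x. \<Sum>i\<in>insert j I. f i x) = L2norm M (\<lambda>x. f j x + (\<Sum>i\<in>I. f i x))"
    using insert by simp
  also have "\<dots> \<le> L2norm M (f j) + L2norm M (\<lambda>x. \<Sum>i\<in>I. f i x)"
    using insert memL2_sum[of I M f] by (intro L2norm_triangle) auto
  also have "\<dots> \<le> (\<Sum>i\<in>insert j I. L2norm M (f i))"
    using insert by simp
  finally show ?case .
qed (simp add: L2norm_zero)

lemma L2norm_parallelogram:
  assumes f: "memL2 M f" and g: "memL2 M g"
  shows "(L2norm M (\<lambda>x. f x + g x))\<^sup>2 + (L2norm M (\<lambda>x. f x - g x))\<^sup>2
    = 2 * (L2norm M f)\<^sup>2 + 2 * (L2norm M g)\<^sup>2"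
proof -
  have "(\<integral>x. (f x + g x)\<^sup>2 \<partial>M) + (\<integral>x. (f x - g x)\<^sup>2 \<partial>M)
      = (\<integral>x. (f x + g x)\<^sup>2 + (f x - g x)\<^sup>2 \<partial>M)"
    using memL2_add[OF f g] memL2_diff[OF f g] by (simp add: memL2_def)
  also have "\<dots> = (\<integral>x. 2 * (f x)\<^sup>2 + 2 * (g x)\<^sup>2 \<partial>M)"
    by (rule Bochner_Integration.integral_cong) (auto simp: power2_eq_square algebra_simps)
  also have "\<dots> = 2 * (\<integral>x. (f x)\<^sup>2 \<partial>M) + 2 * (\<integral>x. (g x)\<^sup>2 \<partial>M)"
    using f g by (simp add: memL2_def)
  finally show ?thesis by (simp add: L2norm_power2)
qed

lemma nn_integral_abs_le_L2norm:
  assumes "prob_space M" "memL2 M f"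
  shows "(\<integral>\<^sup>+x. ennreal \<bar>f x\<bar> \<partial>M) \<le> ennreal (L2norm M f)"
proof -
  have one: "memL2 M (\<lambda>x. 1)" by (rule memL2_const[OF assms(1)])
  have [measurable]: "f \<in> borel_measurable M" using assms(2) by (simp add: memL2_def)
  then have abs_f: "memL2 M (\<lambda>x. \<bar>f x\<bar>)" using assms(2) by (simp add: memL2_def)
  have "(\<integral>\<^sup>+x. ennreal \<bar>f x\<bar> \<partial>M) = ennreal (\<integral>x. \<bar>f x\<bar> \<partial>M)"
    using integrable_mult_memL2[OF abs_f one] by (intro nn_integral_eq_integral) auto
  also have "(\<integral>x. \<bar>f x\<bar> \<partial>M) \<le> L2norm M (\<lambda>x. \<bar>f x\<bar>) * L2norm M (\<lambda>x. 1)"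
    using L2_Cauchy_Schwarz[OF abs_f one] by (simp add: abs_le_iff)
  also have "\<dots> = L2norm M f"
    using assms(1) by (simp add: L2norm_def prob_space.prob_space)
  finally show ?thesis by (simp add: ennreal_leI)
qed

section \<open>Completeness\<close>

definition L2_Cauchy :: "'a measure \<Rightarrow> (nat \<Rightarrow> 'a \<Rightarrow> real) \<Rightarrow> bool" where
  "L2_Cauchy M u \<longleftrightarrow> (\<forall>e>0. \<exists>N. \<forall>m\<ge>N. \<forall>n\<ge>N. L2norm M (\<lambda>x. u m x - u n x) < e)"

text \<open>Fatou's lemma for the \<open>L\<^sup>2\<close> norm.\<close>

lemma L2norm_le_of_AE_tendsto:
  assumes u: "\<And>k. memL2 M (u k)" and lim: "AE x in M. (\<lambda>k. u k x) \<longlonglongrightarrow> v x"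
    and [measurable]: "v \<in> borel_measurable M" and bound: "\<And>k. L2norm M (u k) \<le> c"
  shows "memL2 M v \<and> L2norm M v \<le> c"
proof -
  have [measurable]: "\<And>k. u k \<in> borel_measurable M" using u by (simp add: memL2_def)
  have c: "0 \<le> c" using bound[of 0] L2norm_nonneg[of M "u 0"] by linarith
  have nn_u: "(\<integral>\<^sup>+x. ennreal ((u k x)\<^sup>2) \<partial>M) \<le> ennreal (c\<^sup>2)" for k
  proof -
    have "(\<integral>\<^sup>+x. ennreal ((u k x)\<^sup>2) \<partial>M) = ennreal ((L2norm M (u k))\<^sup>2)"
      using u[of k] by (simp add: L2norm_power2 memL2_def nn_integral_eq_integral)
    also have "\<dots> \<le> ennreal (c\<^sup>2)"
      using bound[of k] L2norm_nonneg[of M "u k"] by (intro ennreal_leI power_mono) auto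
    finally show ?thesis .
  qed
  have "AE x in M. ennreal ((v x)\<^sup>2) = liminf (\<lambda>k. ennreal ((u k x)\<^sup>2))"
    using lim
  proof eventually_elim
    case (elim x)
    then have "(\<lambda>k. (u k x)\<^sup>2) \<longlonglongrightarrow> (v x)\<^sup>2"
      by (rule tendsto_power)
    then have "(\<lambda>k. ennreal ((u k x)\<^sup>2)) \<longlonglongrightarrow> ennreal ((v x)\<^sup>2)"
      by (rule tendsto_ennrealI)
    from lim_imp_Liminf[OF _ this] show ?case by simp
  qed
  then have "(\<integral>\<^sup>+x. ennreal ((v x)\<^sup>2) \<partial>M) = (\<integral>\<^sup>+x. liminf (\<lambda>k. ennreal ((u k x)\<^sup>2)) \<partial>M)"
    by (rule nn_integral_cong_AE)
  also have "\<dots> \<le> liminf (\<lambda>k. \<integral>\<^sup>+x. ennreal ((u k x)\<^sup>2) \<partial>M)"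
    by (rule nn_integral_liminf) simp
  also have "\<dots> \<le> ennreal (c\<^sup>2)"
    by (rule Liminf_le) (auto intro!: always_eventually nn_u)
  finally have nn_v: "(\<integral>\<^sup>+x. ennreal ((v x)\<^sup>2) \<partial>M) \<le> ennreal (c\<^sup>2)" .
  then have "integrable M (\<lambda>x. (v x)\<^sup>2)"
    by (intro integrableI_bounded) (auto simp: le_less_trans)
  moreover from this have "(\<integral>x. (v x)\<^sup>2 \<partial>M) \<le> c\<^sup>2"
    using nn_v by (simp add: nn_integral_eq_integral)
  then have "L2norm M v \<le> sqrt (c\<^sup>2)"
    unfolding L2norm_def by (rule real_sqrt_le_mono)
  ultimately show ?thesis using c by (simp add: memL2_def)
qed

lemma L2norm_geometric_increments:
  assumes g: "\<And>k. memL2 M (g k)"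
    and inc: "\<And>k. L2norm M (\<lambda>x. g (Suc k) x - g k x) \<le> (1/2)^k"
  shows "L2norm M (\<lambda>x. g (k + K) x - g k x) \<le> 2 * (1/2)^k"
proof -
  have "L2norm M (\<lambda>x. g (k + K) x - g k x)
      = L2norm M (\<lambda>x. \<Sum>j<K. g (Suc (k + j)) x - g (k + j) x)"
    using sum_lessThan_telescope[of "\<lambda>j. g (k + j) x" K for x] by simp
  also have "\<dots> \<le> (\<Sum>j<K. L2norm M (\<lambda>x. g (Suc (k + j)) x - g (k + j) x))"
    by (rule L2norm_sum_le) (auto intro: g memL2_diff)
  also have "\<dots> \<le> (\<Sum>j<K. (1/2)^k * (1/2::real)^j)"
    by (intro sum_mono) (simp add: inc flip: power_add)
  also have "\<dots> = (1/2)^k * (2 - 2 * (1/2)^K)"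
    by (simp add: sum_distrib_left[symmetric] sum_gp_strict)
  also have "\<dots> \<le> 2 * (1/2)^k" by simp
  finally show ?thesis .
qed

lemma AE_convergent_of_geometric_increments:
  assumes "prob_space M" and g: "\<And>k. memL2 M (g k)"
    and inc: "\<And>k. L2norm M (\<lambda>x. g (Suc k) x - g k x) \<le> (1/2)^k"
  shows "AE x in M. convergent (\<lambda>k. g k x)"
proof -
  have [measurable]: "\<And>k. g k \<in> borel_measurable M" using g by (simp add: memL2_def)
  define D where "D j x = \<bar>g (Suc j) x - g j x\<bar>" for j x
  have [measurable]: "\<And>j. D j \<in> borel_measurable M" unfolding D_def by measurable
  have "(\<integral>\<^sup>+x. (\<Sum>j. ennreal (D j x)) \<partial>M) = (\<Sum>j. \<integral>\<^sup>+x. ennreal (D j x) \<partial>M)"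
    by (rule nn_integral_suminf) measurable
  also have "\<dots> \<le> (\<Sum>j. ennreal ((1/2)^j))"
  proof (intro suminf_le summableI)
    fix j
    have "(\<integral>\<^sup>+x. ennreal (D j x) \<partial>M) \<le> ennreal (L2norm M (\<lambda>x. g (Suc j) x - g j x))"
      unfolding D_def by (rule nn_integral_abs_le_L2norm[OF assms(1) memL2_diff[OF g g]])
    also have "\<dots> \<le> ennreal ((1/2)^j)" by (rule ennreal_leI[OF inc])
    finally show "(\<integral>\<^sup>+x. ennreal (D j x) \<partial>M) \<le> ennreal ((1/2)^j)" .
  qed
  also have "\<dots> = ennreal (\<Sum>j. (1/2)^j)"
    by (rule suminf_ennreal2) auto
  finally have "(\<integral>\<^sup>+x. (\<Sum>j. ennreal (D j x)) \<partial>M) \<le> ennreal (\<Sum>j. (1/2)^j)" .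
  then have "(\<integral>\<^sup>+x. (\<Sum>j. ennreal (D j x)) \<partial>M) \<noteq> \<infinity>"
    using neq_top_trans[OF ennreal_neq_top] by simp
  then have "AE x in M. (\<Sum>j. ennreal (D j x)) \<noteq> \<infinity>"
    by (intro nn_integral_noteq_infinite) measurable
  then show ?thesis
  proof eventually_elim
    case (elim x)
    then have "summable (\<lambda>j. \<bar>g (Suc j) x - g j x\<bar>)"
      by (intro summable_suminf_not_top) (auto simp: D_def)
    then have "summable (\<lambda>j. g (Suc j) x - g j x)"
      by (rule summable_rabs_cancel)
    then have "convergent (\<lambda>n. \<Sum>j<n. g (Suc j) x - g j x)"
      unfolding summable_iff_convergent .
    then show ?case
      by (simp add: sum_lessThan_telescope[of "\<lambda>j. g j x"] convergent_diff_const_right_iff)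
  qed
qed

lemma L2_limit_of_geometric_increments:
  assumes "prob_space M" and g: "\<And>k. memL2 M (g k)"
    and inc: "\<And>k. L2norm M (\<lambda>x. g (Suc k) x - g k x) \<le> (1/2)^k"
  obtains f where "memL2 M f" "\<And>k. L2norm M (\<lambda>x. f x - g k x) \<le> 2 * (1/2)^k"
proof -
  have [measurable]: "\<And>k. g k \<in> borel_measurable M" using g by (simp add: memL2_def)
  define f where "f x = lim (\<lambda>k. g k x)" for x
  have [measurable]: "f \<in> borel_measurable M" unfolding f_def by measurable
  have conv: "AE x in M. (\<lambda>k. g k x) \<longlonglongrightarrow> f x"
    using AE_convergent_of_geometric_increments[OF assms]
    by eventually_elim (simp add: f_def convergent_LIMSEQ_iff)
  have near: "memL2 M (\<lambda>x. f x - g k x) \<and> L2norm M (\<lambda>x. f x - g k x) \<le> 2 * (1/2)^k" for k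
  proof (rule L2norm_le_of_AE_tendsto)
    show "AE x in M. (\<lambda>K. g (k + K) x - g k x) \<longlonglongrightarrow> f x - g k x"
      using conv
    proof eventually_elim
      case (elim x)
      then have "(\<lambda>K. g (k + K) x) \<longlonglongrightarrow> f x"
        using LIMSEQ_ignore_initial_segment[OF elim, of k] by (simp add: add.commute)
      then show ?case by (intro tendsto_diff tendsto_const)
    qed
    show "memL2 M (\<lambda>x. g (k + K) x - g k x)" for K by (intro memL2_diff g)
    show "L2norm M (\<lambda>x. g (k + K) x - g k x) \<le> 2 * (1/2)^k" for K
      by (rule L2norm_geometric_increments[OF g inc])
  qed measurable
  have "memL2 M (\<lambda>x. (f x - g 0 x) + g 0 x)"
    using memL2_add[OF conjunct1[OF near[of 0]] g[of 0]] .
  then have "memL2 M f" by simp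
  then show ?thesis using near by (intro that) auto
qed

lemma L2_complete:
  assumes "prob_space M" and u: "\<And>n. memL2 M (u n)" and "L2_Cauchy M u"
  obtains f where "memL2 M f" "(\<lambda>n. L2norm M (\<lambda>x. u n x - f x)) \<longlonglongrightarrow> 0"
proof -
  have "\<forall>k. \<exists>N. \<forall>m\<ge>N. \<forall>n\<ge>N. L2norm M (\<lambda>x. u m x - u n x) < (1/2)^k"
    using \<open>L2_Cauchy M u\<close> by (simp add: L2_Cauchy_def)
  then obtain N where N: "\<And>k m n. m \<ge> N k \<Longrightarrow> n \<ge> N k \<Longrightarrow> L2norm M (\<lambda>x. u m x - u n x) < (1/2)^k"
    by metis
  define r where "r k = (\<Sum>j\<le>k. N j)" for k
  have rN: "N k \<le> r k" for k unfolding r_def by (rule member_le_sum) auto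
  have r_mono: "r k \<le> r (Suc k)" for k unfolding r_def by simp
  have "L2norm M (\<lambda>x. u (r (Suc k)) x - u (r k) x) \<le> (1/2)^k" for k
    using N[of k "r (Suc k)" "r k"] rN[of k] r_mono[of k] by simp
  then obtain f where f: "memL2 M f" and near: "\<And>k. L2norm M (\<lambda>x. f x - u (r k) x) \<le> 2 * (1/2)^k"
    using L2_limit_of_geometric_increments[OF assms(1) u] by blast
  have "(\<lambda>n. L2norm M (\<lambda>x. u n x - f x)) \<longlonglongrightarrow> 0"
  proof (rule LIMSEQ_I)
    fix e :: real assume "0 < e"
    then obtain k where k: "(1/2::real)^k < e / 3"
      using real_arch_pow_inv[of "e/3" "1/2"] by auto
    have "L2norm M (\<lambda>x. u n x - f x) < e" if "n \<ge> N k" for n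
    proof -
      have "L2norm M (\<lambda>x. u n x - f x)
          \<le> L2norm M (\<lambda>x. u n x - u (r k) x) + L2norm M (\<lambda>x. f x - u (r k) x)"
        using L2norm_dist_triangle[OF u u f, of n "r k"] L2norm_diff_commute[of M "u (r k)" f]
        by simp
      also have "\<dots> < (1/2)^k + 2 * (1/2)^k"
        using N[of k n "r k"] that rN[of k] near[of k] by simp
      finally show ?thesis using k by simp
    qed
    then show "\<exists>N. \<forall>n\<ge>N. norm (L2norm M (\<lambda>x. u n x - f x) - 0) < e"
      by (auto simp: abs_of_nonneg[OF L2norm_nonneg])
  qed
  with f that show ?thesis by blast
qed

lemma ae_eq_refl: "ae_eq M f f"
  by (simp add: ae_eq_def)

lemma ae_eq_sym: "ae_eq M f g \<Longrightarrow> ae_eq M g f"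
  by (auto simp: ae_eq_def elim: eventually_mono)

lemma ae_eq_trans [trans]: "ae_eq M f g \<Longrightarrow> ae_eq M g h \<Longrightarrow> ae_eq M f h"
  unfolding ae_eq_def by (erule (1) eventually_elim2) simp

lemma ae_eq_add: "ae_eq M f f' \<Longrightarrow> ae_eq M g g' \<Longrightarrow> ae_eq M (\<lambda>x. f x + g x) (\<lambda>x. f' x + g' x)"
  unfolding ae_eq_def by (erule (1) eventually_elim2) simp

lemma ae_eq_diff: "ae_eq M f f' \<Longrightarrow> ae_eq M g g' \<Longrightarrow> ae_eq M (\<lambda>x. f x - g x) (\<lambda>x. f' x - g' x)"
  unfolding ae_eq_def by (erule (1) eventually_elim2) simp

lemma ae_eq_cmult: "ae_eq M f f' \<Longrightarrow> ae_eq M (\<lambda>x. c * f x) (\<lambda>x. c * f' x)"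
  unfolding ae_eq_def by (auto elim: eventually_mono)

lemma ae_eq_sum:
  "finite I \<Longrightarrow> (\<And>i. i \<in> I \<Longrightarrow> ae_eq M (f i) (g i)) \<Longrightarrow>
    ae_eq M (\<lambda>x. \<Sum>i\<in>I. f i x) (\<lambda>x. \<Sum>i\<in>I. g i x)"
  by (induction I rule: finite_induct) (auto intro: ae_eq_refl ae_eq_add)

lemma ae_eq_diff_eq_0_iff: "ae_eq M (\<lambda>x. f x - g x) (\<lambda>x. 0) \<longleftrightarrow> ae_eq M f g"
  by (simp add: ae_eq_def)

section \<open>Bounded operators on a closed subspace\<close>

locale L2_subspace =
  fixes M :: "'a measure" and V :: "('a \<Rightarrow> real) set"
  assumes closed_subspace: "closed_L2_subspace M V" and prob: "prob_space M"
begin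

lemma subspace_memL2: "f \<in> V \<Longrightarrow> memL2 M f"
  using closed_subspace unfolding closed_L2_subspace_def by blast

lemma subspace_zero: "(\<lambda>x. 0) \<in> V"
  using closed_subspace unfolding closed_L2_subspace_def by blast

lemma subspace_add: "f \<in> V \<Longrightarrow> g \<in> V \<Longrightarrow> (\<lambda>x. f x + g x) \<in> V"
  using closed_subspace unfolding closed_L2_subspace_def by blast

lemma subspace_cmult: "f \<in> V \<Longrightarrow> (\<lambda>x. c * f x) \<in> V"
  using closed_subspace unfolding closed_L2_subspace_def by blast

lemma subspace_diff: "f \<in> V \<Longrightarrow> g \<in> V \<Longrightarrow> (\<lambda>x. f x - g x) \<in> V"
  using subspace_add[of f "\<lambda>x. (-1) * g x"] subspace_cmult[of g "-1"] by simp

lemma subspace_sum: "finite I \<Longrightarrow> (\<And>i. i \<in> I \<Longrightarrow> f i \<in> V) \<Longrightarrow> (\<lambda>x. \<Sum>i\<in>I. f i x) \<in> V"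
  by (induction I rule: finite_induct) (auto intro: subspace_add subspace_zero)

lemma subspace_limit:
  "(\<And>n. u n \<in> V) \<Longrightarrow> memL2 M f \<Longrightarrow> (\<lambda>n. L2norm M (\<lambda>x. u n x - f x)) \<longlonglongrightarrow> 0 \<Longrightarrow> f \<in> V"
  using closed_subspace unfolding closed_L2_subspace_def by blast

lemma L2norm_cong_ae_subspace: "f \<in> V \<Longrightarrow> g \<in> V \<Longrightarrow> ae_eq M f g \<Longrightarrow> L2norm M f = L2norm M g"
  by (intro L2norm_cong_ae subspace_memL2)

abbreviation bounded_op :: "(('a \<Rightarrow> real) \<Rightarrow> ('a \<Rightarrow> real)) \<Rightarrow> bool" where
  "bounded_op T \<equiv> bounded_linear_op_on M V T"

lemma bounded_op_maps: "bounded_op T \<Longrightarrow> f \<in> V \<Longrightarrow> T f \<in> V"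
  by (simp add: bounded_linear_op_on_def)

lemma bounded_op_add:
  "bounded_op T \<Longrightarrow> f \<in> V \<Longrightarrow> g \<in> V \<Longrightarrow> ae_eq M (T (\<lambda>x. f x + g x)) (\<lambda>x. T f x + T g x)"
  by (simp add: bounded_linear_op_on_def)

lemma bounded_op_cmult: "bounded_op T \<Longrightarrow> f \<in> V \<Longrightarrow> ae_eq M (T (\<lambda>x. c * f x)) (\<lambda>x. c * T f x)"
  by (simp add: bounded_linear_op_on_def)

lemma bounded_op_norm_le:
  assumes "bounded_op T"
  obtains C where "0 \<le> C" "\<And>f. f \<in> V \<Longrightarrow> L2norm M (T f) \<le> C * L2norm M f"
proof -
  obtain C where C: "\<And>f. f \<in> V \<Longrightarrow> L2norm M (T f) \<le> C * L2norm M f"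
    using assms unfolding bounded_linear_op_on_def by blast
  have "C * L2norm M f \<le> max C 0 * L2norm M f" for f
    by (intro mult_right_mono L2norm_nonneg) simp
  then show ?thesis
    using C by (intro that[of "max C 0"]) (auto intro: order_trans)
qed

lemma bounded_op_diff:
  assumes T: "bounded_op T" and f: "f \<in> V" and g: "g \<in> V"
  shows "ae_eq M (T (\<lambda>x. f x - g x)) (\<lambda>x. T f x - T g x)"
proof -
  have "ae_eq M (T (\<lambda>x. f x + (-1) * g x)) (\<lambda>x. T f x + T (\<lambda>x. (-1) * g x) x)"
    using subspace_cmult[OF g] by (intro bounded_op_add T f)
  also have "ae_eq M \<dots> (\<lambda>x. T f x + (-1) * T g x)"
    by (intro ae_eq_add ae_eq_refl bounded_op_cmult T g)
  finally show ?thesis by simp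
qed

lemma bounded_op_cong_ae:
  assumes T: "bounded_op T" and f: "f \<in> V" and g: "g \<in> V" and fg: "ae_eq M f g"
  shows "ae_eq M (T f) (T g)"
proof -
  obtain C where C: "\<And>h. h \<in> V \<Longrightarrow> L2norm M (T h) \<le> C * L2norm M h"
    using bounded_op_norm_le[OF T] by blast
  have fg_V: "(\<lambda>x. f x - g x) \<in> V" by (rule subspace_diff[OF f g])
  have "L2norm M (\<lambda>x. f x - g x) = L2norm M (\<lambda>x. 0)"
    using fg by (intro L2norm_cong_ae_subspace fg_V subspace_zero) (simp add: ae_eq_def)
  then have "L2norm M (T (\<lambda>x. f x - g x)) \<le> 0"
    using C[OF fg_V] by (simp add: L2norm_zero)
  then have "ae_eq M (T (\<lambda>x. f x - g x)) (\<lambda>x. 0)"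
    using L2norm_nonneg[of M] bounded_op_maps[OF T fg_V]
    by (intro ae_eq_zero_if_L2norm_eq_0 subspace_memL2) (auto intro: antisym)
  then have "ae_eq M (\<lambda>x. T f x - T g x) (\<lambda>x. 0)"
    using ae_eq_trans[OF ae_eq_sym[OF bounded_op_diff[OF T f g]]] by blast
  then show ?thesis by (simp add: ae_eq_diff_eq_0_iff)
qed

lemma bounded_op_sum:
  assumes T: "bounded_op T"
  shows "finite I \<Longrightarrow> (\<And>i. i \<in> I \<Longrightarrow> f i \<in> V) \<Longrightarrow>
    ae_eq M (T (\<lambda>x. \<Sum>i\<in>I. f i x)) (\<lambda>x. \<Sum>i\<in>I. T (f i) x)"
proof (induction I rule: finite_induct)
  case empty
  show ?case using bounded_op_cmult[OF T subspace_zero, of 0] by simp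
next
  case (insert j I)
  then have "ae_eq M (T (\<lambda>x. f j x + (\<Sum>i\<in>I. f i x))) (\<lambda>x. T (f j) x + T (\<lambda>x. \<Sum>i\<in>I. f i x) x)"
    by (intro bounded_op_add[OF T] subspace_sum) auto
  also have "ae_eq M \<dots> (\<lambda>x. T (f j) x + (\<Sum>i\<in>I. T (f i) x))"
    using insert by (intro ae_eq_add ae_eq_refl) auto
  finally show ?case using insert by simp
qed

lemma bounded_op_id: "bounded_op (\<lambda>f. f)"
  unfolding bounded_linear_op_on_def by (auto simp: ae_eq_refl intro: exI[of _ 1])

lemma bounded_op_comp:
  assumes S: "bounded_op S" and T: "bounded_op T"
  shows "bounded_op (S \<circ> T)"
proof -
  obtain CS where CS: "0 \<le> CS" "\<And>f. f \<in> V \<Longrightarrow> L2norm M (S f) \<le> CS * L2norm M f"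
    using bounded_op_norm_le[OF S] by blast
  obtain CT where CT: "\<And>f. f \<in> V \<Longrightarrow> L2norm M (T f) \<le> CT * L2norm M f"
    using bounded_op_norm_le[OF T] by blast
  have "L2norm M (S (T f)) \<le> (CS * CT) * L2norm M f" if f: "f \<in> V" for f
    using CS(2)[OF bounded_op_maps[OF T f]] mult_left_mono[OF CT[OF f] CS(1)] by simp
  moreover have "ae_eq M (S (T (\<lambda>x. f x + g x))) (\<lambda>x. S (T f) x + S (T g) x)"
    if f: "f \<in> V" and g: "g \<in> V" for f g
  proof -
    have "ae_eq M (S (T (\<lambda>x. f x + g x))) (S (\<lambda>x. T f x + T g x))"
      by (intro bounded_op_cong_ae[OF S] bounded_op_maps[OF T] bounded_op_add[OF T]
          subspace_add f g)
    also have "ae_eq M \<dots> (\<lambda>x. S (T f) x + S (T g) x)"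
      by (intro bounded_op_add[OF S] bounded_op_maps[OF T] f g)
    finally show ?thesis .
  qed
  moreover have "ae_eq M (S (T (\<lambda>x. c * f x))) (\<lambda>x. c * S (T f) x)" if f: "f \<in> V" for c f
  proof -
    have "ae_eq M (S (T (\<lambda>x. c * f x))) (S (\<lambda>x. c * T f x))"
      by (intro bounded_op_cong_ae[OF S] bounded_op_maps[OF T] bounded_op_cmult[OF T]
          subspace_cmult f)
    also have "ae_eq M \<dots> (\<lambda>x. c * S (T f) x)"
      by (intro bounded_op_cmult[OF S] bounded_op_maps[OF T] f)
    finally show ?thesis .
  qed
  ultimately show ?thesis
    using bounded_op_maps[OF S] bounded_op_maps[OF T] unfolding bounded_linear_op_on_def by auto
qed

lemma bounded_op_minus:
  assumes S: "bounded_op S" and T: "bounded_op T"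
  shows "bounded_op (\<lambda>f x. S f x - T f x)"
proof -
  obtain CS where CS: "\<And>f. f \<in> V \<Longrightarrow> L2norm M (S f) \<le> CS * L2norm M f"
    using bounded_op_norm_le[OF S] by blast
  obtain CT where CT: "\<And>f. f \<in> V \<Longrightarrow> L2norm M (T f) \<le> CT * L2norm M f"
    using bounded_op_norm_le[OF T] by blast
  have "L2norm M (\<lambda>x. S f x - T f x) \<le> (CS + CT) * L2norm M f" if f: "f \<in> V" for f
    using L2norm_diff_le[OF subspace_memL2 subspace_memL2, OF bounded_op_maps[OF S f]
        bounded_op_maps[OF T f]] CS[OF f] CT[OF f]
    by (simp add: algebra_simps)
  moreover have "ae_eq M (\<lambda>x. S (\<lambda>x. f x + g x) x - T (\<lambda>x. f x + g x) x)
      (\<lambda>x. (S f x - T f x) + (S g x - T g x))" if "f \<in> V" "g \<in> V" for f g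
    using ae_eq_diff[OF bounded_op_add[OF S that] bounded_op_add[OF T that]]
    by (simp add: algebra_simps)
  moreover have "ae_eq M (\<lambda>x. S (\<lambda>x. c * f x) x - T (\<lambda>x. c * f x) x) (\<lambda>x. c * (S f x - T f x))"
    if "f \<in> V" for c f
    using ae_eq_diff[OF bounded_op_cmult[OF S that] bounded_op_cmult[OF T that]]
    by (simp add: algebra_simps)
  ultimately show ?thesis
    using bounded_op_maps[OF S] bounded_op_maps[OF T] subspace_diff
    unfolding bounded_linear_op_on_def by auto
qed

lemma bounded_op_funpow: "bounded_op T \<Longrightarrow> bounded_op (T ^^ k)"
  by (induction k) (auto intro: bounded_op_comp bounded_op_id simp: id_def)

definition commuting :: "(('a \<Rightarrow> real) \<Rightarrow> ('a \<Rightarrow> real)) \<Rightarrow> (('a \<Rightarrow> real) \<Rightarrow> ('a \<Rightarrow> real)) \<Rightarrow> bool"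
  where "commuting S T \<longleftrightarrow> (\<forall>f\<in>V. ae_eq M (S (T f)) (T (S f)))"

lemma commuting_sym: "commuting S T \<Longrightarrow> commuting T S"
  unfolding commuting_def by (auto intro: ae_eq_sym)

lemma commuting_id: "commuting (\<lambda>f. f) T"
  unfolding commuting_def by (simp add: ae_eq_refl)

lemma commuting_comp:
  assumes S1: "bounded_op S1" and S2: "bounded_op S2" and T: "bounded_op T"
    and "commuting S1 T" "commuting S2 T"
  shows "commuting (S1 \<circ> S2) T"
  unfolding commuting_def
proof
  fix f assume f: "f \<in> V"
  have "ae_eq M (S1 (S2 (T f))) (S1 (T (S2 f)))"
    using \<open>commuting S2 T\<close> f unfolding commuting_def
    by (intro bounded_op_cong_ae[OF S1] bounded_op_maps[OF S2] bounded_op_maps[OF T]) auto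
  also have "ae_eq M \<dots> (T (S1 (S2 f)))"
    using \<open>commuting S1 T\<close> bounded_op_maps[OF S2 f] unfolding commuting_def by blast
  finally show "ae_eq M ((S1 \<circ> S2) (T f)) (T ((S1 \<circ> S2) f))" by simp
qed

lemma commuting_minus:
  assumes S1: "bounded_op S1" and S2: "bounded_op S2" and T: "bounded_op T"
    and "commuting S1 T" "commuting S2 T"
  shows "commuting (\<lambda>f x. S1 f x - S2 f x) T"
  unfolding commuting_def
proof
  fix f assume f: "f \<in> V"
  have "ae_eq M (\<lambda>x. S1 (T f) x - S2 (T f) x) (\<lambda>x. T (S1 f) x - T (S2 f) x)"
    using assms(4,5) f unfolding commuting_def by (intro ae_eq_diff) auto
  also have "ae_eq M \<dots> (T (\<lambda>x. S1 f x - S2 f x))"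
    by (rule ae_eq_sym[OF bounded_op_diff[OF T bounded_op_maps[OF S1 f] bounded_op_maps[OF S2 f]]])
  finally show "ae_eq M ((\<lambda>f x. S1 f x - S2 f x) (T f)) (T ((\<lambda>f x. S1 f x - S2 f x) f))"
    by simp
qed

section \<open>From bounded approximate solutions to an exact solution\<close>

lemma bounded_op_solves_limit:
  assumes T: "bounded_op T" and h: "\<And>n. h n \<in> V" and f: "f \<in> V" and F: "F \<in> V"
    and h_lim: "(\<lambda>n. L2norm M (\<lambda>x. h n x - f x)) \<longlonglongrightarrow> 0"
    and residual: "(\<lambda>n. L2norm M (\<lambda>x. T (h n) x - F x)) \<longlonglongrightarrow> 0"
  shows "ae_eq M F (T f)"
proof -
  obtain C where C: "\<And>g. g \<in> V \<Longrightarrow> L2norm M (T g) \<le> C * L2norm M g"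
    using bounded_op_norm_le[OF T] by blast
  have Tf_V: "(\<lambda>x. T f x - F x) \<in> V" by (intro subspace_diff bounded_op_maps[OF T] f F)
  have "L2norm M (\<lambda>x. T f x - F x)
      \<le> C * L2norm M (\<lambda>x. h n x - f x) + L2norm M (\<lambda>x. T (h n) x - F x)" for n
  proof -
    have diff_V: "(\<lambda>x. f x - h n x) \<in> V" by (intro subspace_diff f h)
    have "L2norm M (\<lambda>x. T f x - F x)
        \<le> L2norm M (\<lambda>x. T f x - T (h n) x) + L2norm M (\<lambda>x. T (h n) x - F x)"
      by (intro L2norm_dist_triangle subspace_memL2 bounded_op_maps[OF T] f h F)
    also have "L2norm M (\<lambda>x. T f x - T (h n) x) = L2norm M (T (\<lambda>x. f x - h n x))"
      by (intro L2norm_cong_ae_subspace subspace_diff bounded_op_maps[OF T] f h diff_V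
          ae_eq_sym[OF bounded_op_diff[OF T f h]])
    also have "\<dots> \<le> C * L2norm M (\<lambda>x. h n x - f x)"
      using C[OF diff_V] by (simp add: L2norm_diff_commute)
    finally show ?thesis by simp
  qed
  moreover have "(\<lambda>n. C * L2norm M (\<lambda>x. h n x - f x) + L2norm M (\<lambda>x. T (h n) x - F x)) \<longlonglongrightarrow> 0"
    using tendsto_add[OF tendsto_mult_right_zero[OF h_lim] residual] by simp
  ultimately have "L2norm M (\<lambda>x. T f x - F x) \<le> 0"
    using LIMSEQ_le_const by blast
  then have "ae_eq M (\<lambda>x. T f x - F x) (\<lambda>x. 0)"
    by (intro ae_eq_zero_if_L2norm_eq_0 subspace_memL2 Tf_V) (simp add: antisym L2norm_nonneg)
  then show ?thesis by (simp add: ae_eq_diff_eq_0_iff ae_eq_sym)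
qed

lemma L2norm_residual_midpoint_le:
  assumes T: "bounded_op T" and f: "f \<in> V" and g: "g \<in> V" and F: "F \<in> V"
  shows "L2norm M (\<lambda>x. T (\<lambda>x. (1/2) * (f x + g x)) x - F x)
    \<le> (1/2) * (L2norm M (\<lambda>x. T f x - F x) + L2norm M (\<lambda>x. T g x - F x))"
proof -
  define mid where "mid = (\<lambda>x. (1/2::real) * (f x + g x))"
  have mid: "mid \<in> V" unfolding mid_def by (intro subspace_cmult subspace_add f g)
  have Tf: "(\<lambda>x. T f x - F x) \<in> V" and Tg: "(\<lambda>x. T g x - F x) \<in> V"
    by (intro subspace_diff bounded_op_maps[OF T] f g F)+
  have "ae_eq M (T mid) (\<lambda>x. (1/2) * T (\<lambda>x. f x + g x) x)"
    unfolding mid_def by (intro bounded_op_cmult[OF T] subspace_add f g)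
  also have "ae_eq M \<dots> (\<lambda>x. (1/2) * (T f x + T g x))"
    by (intro ae_eq_cmult bounded_op_add[OF T] f g)
  finally have "ae_eq M (\<lambda>x. T mid x - F x) (\<lambda>x. (1/2) * (T f x + T g x) - F x)"
    by (rule ae_eq_diff[OF _ ae_eq_refl])
  also have "(\<lambda>x. (1/2) * (T f x + T g x) - F x) = (\<lambda>x. (1/2) * ((T f x - F x) + (T g x - F x)))"
    by (rule ext) (simp add: field_simps)
  finally have "L2norm M (\<lambda>x. T mid x - F x)
      = L2norm M (\<lambda>x. (1/2) * ((T f x - F x) + (T g x - F x)))"
    by (intro L2norm_cong_ae_subspace subspace_diff subspace_cmult subspace_add
        bounded_op_maps[OF T] mid F Tf Tg)
  also have "\<dots> = \<bar>1/2\<bar> * L2norm M (\<lambda>x. (T f x - F x) + (T g x - F x))"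
    by (rule L2norm_cmult)
  also have "\<dots> \<le> \<bar>1/2\<bar> * (L2norm M (\<lambda>x. T f x - F x) + L2norm M (\<lambda>x. T g x - F x))"
    by (intro mult_left_mono L2norm_triangle subspace_memL2 Tf Tg) simp
  finally show ?thesis by (simp add: mid_def)
qed

lemma Cauchy_of_minimizing_bound:
  fixes m :: "nat \<Rightarrow> real" and \<delta> :: "nat \<Rightarrow> nat \<Rightarrow> real"
  assumes "Cauchy m" and \<delta>_nonneg: "\<And>k j. 0 \<le> \<delta> k j" and \<delta>_sym: "\<And>k j. \<delta> k j = \<delta> j k"
    and \<delta>_bound: "\<And>k j. k \<le> j \<Longrightarrow> (\<delta> k j)\<^sup>2 \<le> 2 * (m j - m k) + 2 / Suc k + 2 / Suc j"
    and "0 < e"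
  shows "\<exists>N. \<forall>a\<ge>N. \<forall>b\<ge>N. \<delta> a b < e"
proof -
  have e8: "0 < e\<^sup>2 / 8" using \<open>0 < e\<close> by simp
  obtain N1 where N1: "\<And>a b. a \<ge> N1 \<Longrightarrow> b \<ge> N1 \<Longrightarrow> \<bar>m a - m b\<bar> < e\<^sup>2 / 8"
    using CauchyD[OF \<open>Cauchy m\<close> e8] by auto
  obtain N2 where N2: "1 / real (Suc N2) < e\<^sup>2 / 8"
    using reals_Archimedean[OF e8] by (auto simp: inverse_eq_divide)
  have small: "1 / real (Suc a) < e\<^sup>2 / 8" if "a \<ge> N2" for a
  proof -
    have "1 / real (Suc a) \<le> 1 / real (Suc N2)" using that by (simp add: frac_le)
    then show ?thesis using N2 by linarith
  qed
  have "\<delta> k j < e" if "k \<le> j" "k \<ge> max N1 N2" for k j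
  proof -
    have "(\<delta> k j)\<^sup>2 \<le> 2 * m j - 2 * m k + 2 * (1 / Suc k) + 2 * (1 / Suc j)"
      using \<delta>_bound[OF that(1)] by (simp only: times_divide_eq_right mult_1_right right_diff_distrib)
    moreover have "m j - m k < e\<^sup>2 / 8"
      using N1[of j k] that abs_ge_self[of "m j - m k"] by linarith
    moreover have "1 / real (Suc k) < e\<^sup>2 / 8" "1 / real (Suc j) < e\<^sup>2 / 8"
      using small that by auto
    ultimately have "(\<delta> k j)\<^sup>2 < e\<^sup>2"
      using e8 by linarith
    then show ?thesis using \<delta>_nonneg[of k j] \<open>0 < e\<close> by (simp add: power_less_imp_less_base)
  qed
  then show ?thesis
    by (metis \<delta>_sym max.bounded_iff nle_le)
qed

theorem exact_solution_of_bounded_approximate_solutions: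
  assumes T: "bounded_op T" and F: "F \<in> V"
    and approx: "\<And>e. e > 0 \<Longrightarrow> \<exists>h\<in>V. L2norm M h \<le> R \<and> L2norm M (\<lambda>x. T h x - F x) \<le> e"
  shows "\<exists>h\<in>V. ae_eq M F (T h)"
proof -
  define S where "S k = {h \<in> V. L2norm M (\<lambda>x. T h x - F x) \<le> 1 / Suc k}" for k
  define m where "m k = Inf ((\<lambda>h. (L2norm M h)\<^sup>2) ` S k)" for k
  have S_bounded_elem: "\<exists>h\<in>S k. L2norm M h \<le> R" for k
    using approx[of "1 / Suc k"] unfolding S_def by auto
  have S_antimono: "S j \<subseteq> S k" if "k \<le> j" for k j
  proof -
    have "1 / real (Suc j) \<le> 1 / real (Suc k)" using that by (simp add: frac_le)
    then show ?thesis unfolding S_def by (auto simp del: of_nat_Suc)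
  qed
  have m_le: "m k \<le> (L2norm M h)\<^sup>2" if "h \<in> S k" for k h
    unfolding m_def using that by (intro cInf_lower bdd_belowI[of _ 0]) auto
  have "incseq m"
  proof (rule incseq_SucI)
    fix k
    show "m k \<le> m (Suc k)"
      unfolding m_def using S_bounded_elem[of "Suc k"] S_antimono[of k "Suc k"]
      by (intro cInf_superset_mono bdd_belowI[of _ 0]) auto
  qed
  moreover have "m k \<le> R\<^sup>2" for k
    using S_bounded_elem[of k] m_le L2norm_nonneg[of M] by (meson order_trans power_mono)
  ultimately have "m \<longlonglongrightarrow> (SUP k. m k)"
    by (intro LIMSEQ_incseq_SUP bdd_aboveI[of _ "R\<^sup>2"]) auto
  then have "Cauchy m" by (rule LIMSEQ_imp_Cauchy)
  have "\<exists>h\<in>S k. (L2norm M h)\<^sup>2 < m k + 1 / Suc k" for k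
  proof -
    have "(\<lambda>h. (L2norm M h)\<^sup>2) ` S k \<noteq> {}" using S_bounded_elem[of k] by auto
    from cInf_lessD[OF this, of "m k + 1 / Suc k"] show ?thesis by (auto simp: m_def)
  qed
  then obtain h where hS: "\<And>k. h k \<in> S k" and h_min: "\<And>k. (L2norm M (h k))\<^sup>2 < m k + 1 / Suc k"
    by metis
  have hV: "h k \<in> V" for k using hS unfolding S_def by auto
  text \<open>The midpoint of \<open>h k\<close> and \<open>h j\<close> lies in \<open>S k\<close>, so its norm is at least \<open>m k\<close>.\<close>
  have "(L2norm M (\<lambda>x. h k x - h j x))\<^sup>2 \<le> 2 * (m j - m k) + 2 / Suc k + 2 / Suc j"
    if "k \<le> j" for k j
  proof -
    have "L2norm M (\<lambda>x. T (\<lambda>x. (1/2) * (h k x + h j x)) x - F x) \<le> 1 / Suc k"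
      using L2norm_residual_midpoint_le[OF T hV hV F, of k j] hS[of k] hS[of j]
        S_antimono[OF that] by (auto simp: S_def)
    moreover have "(\<lambda>x. (1/2) * (h k x + h j x)) \<in> V"
      by (intro subspace_cmult subspace_add hV)
    ultimately have "m k \<le> (L2norm M (\<lambda>x. (1/2) * (h k x + h j x)))\<^sup>2"
      by (intro m_le) (simp add: S_def)
    moreover have "(L2norm M (\<lambda>x. h k x + h j x))\<^sup>2
        = 4 * (L2norm M (\<lambda>x. (1/2) * (h k x + h j x)))\<^sup>2"
      unfolding L2norm_cmult by (simp add: power_divide)
    ultimately have "4 * m k \<le> (L2norm M (\<lambda>x. h k x + h j x))\<^sup>2"
      by linarith
    then have "(L2norm M (\<lambda>x. h k x - h j x))\<^sup>2
        \<le> 2 * (L2norm M (h k))\<^sup>2 + 2 * (L2norm M (h j))\<^sup>2 - 4 * m k"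
      using L2norm_parallelogram[OF subspace_memL2[OF hV] subspace_memL2[OF hV], of k j] by simp
    also have "\<dots> \<le> 2 * (m k + 1 / Suc k) + 2 * (m j + 1 / Suc j) - 4 * m k"
      using h_min[of k] h_min[of j] by simp
    also have "\<dots> = 2 * (m j - m k) + 2 / Suc k + 2 / Suc j"
      by (simp add: algebra_simps)
    finally show ?thesis .
  qed
  then have "L2_Cauchy M h"
    unfolding L2_Cauchy_def using L2norm_diff_commute L2norm_nonneg
    by (intro allI impI Cauchy_of_minimizing_bound[OF \<open>Cauchy m\<close>]) auto
  then obtain f where f: "memL2 M f" and h_lim: "(\<lambda>n. L2norm M (\<lambda>x. h n x - f x)) \<longlonglongrightarrow> 0"
    using L2_complete[OF prob _ \<open>L2_Cauchy M h\<close>] hV subspace_memL2 by blast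
  have "(\<lambda>n. L2norm M (\<lambda>x. T (h n) x - F x)) \<longlonglongrightarrow> 0"
  proof (rule tendsto_sandwich[OF _ _ tendsto_const LIMSEQ_Suc[OF lim_1_over_n]])
    show "\<forall>\<^sub>F n in sequentially. 0 \<le> L2norm M (\<lambda>x. T (h n) x - F x)"
      by (simp add: L2norm_nonneg)
    show "\<forall>\<^sub>F n in sequentially. L2norm M (\<lambda>x. T (h n) x - F x) \<le> 1 / real (Suc n)"
      using hS by (simp add: S_def)
  qed
  moreover have "f \<in> V" by (rule subspace_limit[OF hV f h_lim])
  ultimately show ?thesis
    using bounded_op_solves_limit[OF T hV _ F h_lim] by blast
qed

end

section \<open>Cesaro means of geometric partial sums\<close>

definition cesaro_mean :: "nat \<Rightarrow> (nat \<Rightarrow> 'a \<Rightarrow> real) \<Rightarrow> 'a \<Rightarrow> real" where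
  "cesaro_mean K h = (\<lambda>x. (1 / real K) * (\<Sum>m<K. h m x))"

definition geom_sum :: "(('a \<Rightarrow> real) \<Rightarrow> ('a \<Rightarrow> real)) \<Rightarrow> nat \<Rightarrow> ('a \<Rightarrow> real) \<Rightarrow> 'a \<Rightarrow> real" where
  "geom_sum T m F = (\<lambda>x. \<Sum>k\<le>m. (T ^^ k) F x)"

abbreviation id_minus :: "(('a \<Rightarrow> real) \<Rightarrow> ('a \<Rightarrow> real)) \<Rightarrow> ('a \<Rightarrow> real) \<Rightarrow> 'a \<Rightarrow> real" where
  "id_minus T \<equiv> \<lambda>f x. f x - T f x"

lemma ae_eq_cesaro_mean: "(\<And>m. ae_eq M (h m) (h' m)) \<Longrightarrow> ae_eq M (cesaro_mean K h) (cesaro_mean K h')"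
  unfolding cesaro_mean_def by (intro ae_eq_cmult ae_eq_sum) auto

lemma geom_sum_Suc_telescope:
  "(\<Sum>m<K. (T ^^ Suc m) F x) = geom_sum T K F x - F x"
  unfolding geom_sum_def by (subst sum.atMost_shift) simp

context L2_subspace
begin

lemma cesaro_mean_in: "(\<And>m. h m \<in> V) \<Longrightarrow> cesaro_mean K h \<in> V"
  unfolding cesaro_mean_def by (intro subspace_cmult subspace_sum) auto

lemma L2norm_cesaro_mean_le:
  assumes "\<And>m. h m \<in> V" "\<And>m. L2norm M (h m) \<le> B" "0 < K"
  shows "L2norm M (cesaro_mean K h) \<le> B"
proof -
  have "L2norm M (cesaro_mean K h) = \<bar>1 / K\<bar> * L2norm M (\<lambda>x. \<Sum>m<K. h m x)"
    by (simp only: cesaro_mean_def L2norm_cmult)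
  also have "\<dots> \<le> \<bar>1 / K\<bar> * (\<Sum>m<K. L2norm M (h m))"
    using assms by (intro mult_left_mono L2norm_sum_le subspace_memL2) auto
  also have "\<dots> \<le> \<bar>1 / K\<bar> * (\<Sum>m<K. B)"
    using assms by (intro mult_left_mono sum_mono) auto
  finally show ?thesis using \<open>0 < K\<close> by simp
qed

lemma bounded_op_cesaro_mean:
  assumes "bounded_op T" "\<And>m. h m \<in> V"
  shows "ae_eq M (T (cesaro_mean K h)) (cesaro_mean K (\<lambda>m. T (h m)))"
proof -
  have "ae_eq M (T (cesaro_mean K h)) (\<lambda>x. (1 / K) * T (\<lambda>x. \<Sum>m<K. h m x) x)"
    unfolding cesaro_mean_def using assms by (intro bounded_op_cmult subspace_sum) auto
  also have "ae_eq M \<dots> (cesaro_mean K (\<lambda>m. T (h m)))"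
    unfolding cesaro_mean_def using assms by (intro ae_eq_cmult bounded_op_sum) auto
  finally show ?thesis .
qed

lemma geom_sum_in: "bounded_op T \<Longrightarrow> F \<in> V \<Longrightarrow> geom_sum T m F \<in> V"
  unfolding geom_sum_def by (intro subspace_sum bounded_op_maps[OF bounded_op_funpow]) auto

lemma id_minus_geom_sum:
  assumes T: "bounded_op T" and F: "F \<in> V"
  shows "ae_eq M (id_minus T (geom_sum T m F)) (\<lambda>x. F x - (T ^^ Suc m) F x)"
proof -
  have "ae_eq M (id_minus T (geom_sum T m F))
      (\<lambda>x. geom_sum T m F x - (\<Sum>k\<le>m. T ((T ^^ k) F) x))"
    unfolding geom_sum_def
    by (intro ae_eq_diff ae_eq_refl bounded_op_sum[OF T] bounded_op_maps[OF bounded_op_funpow[OF T] F])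
      auto
  also have "(\<lambda>x. geom_sum T m F x - (\<Sum>k\<le>m. T ((T ^^ k) F) x)) = (\<lambda>x. F x - (T ^^ Suc m) F x)"
    using sum_telescope[of "\<lambda>k. (T ^^ k) F x" m for x]
    by (simp add: geom_sum_def sum_subtractf[symmetric])
  finally show ?thesis .
qed

text \<open>With \<open>E\<^sub>m := P h\<^sub>m - G\<^sub>m\<close>, commutativity and the telescoping identity
  \<open>(I - T) G\<^sub>m = F - T\<^sup>m\<^sup>+\<^sup>1 F\<close> give the residual of the Cesaro mean of the \<open>h\<^sub>m\<close> exactly.\<close>

lemma residual_cesaro_mean:
  assumes P: "bounded_op P" and T: "bounded_op T" and PT: "commuting P T"
    and F: "F \<in> V" and h: "\<And>m. h m \<in> V" and "0 < K"
  shows "ae_eq M (P (id_minus T (cesaro_mean K h)))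
    (\<lambda>x. F x - (geom_sum T K F x - F x) / K
      + cesaro_mean K (\<lambda>m. id_minus T (\<lambda>x. P (h m) x - geom_sum T m F x)) x)"
proof -
  let ?R = "id_minus T" and ?G = "\<lambda>m. geom_sum T m F"
  define E where "E m = (\<lambda>x. P (h m) x - ?G m x)" for m
  have R: "bounded_op ?R" by (rule bounded_op_minus[OF bounded_op_id T])
  have G: "?G m \<in> V" for m by (rule geom_sum_in[OF T F])
  have E: "E m \<in> V" for m unfolding E_def by (intro subspace_diff bounded_op_maps[OF P] h G)
  have "commuting ?R P"
    using commuting_minus[OF bounded_op_id T P commuting_id commuting_sym[OF PT]] .
  then have "ae_eq M (P (?R (cesaro_mean K h))) (?R (P (cesaro_mean K h)))"
    using cesaro_mean_in[OF h] unfolding commuting_def by (simp add: ae_eq_sym)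
  also have "ae_eq M \<dots> (?R (cesaro_mean K (\<lambda>m. P (h m))))"
    by (intro bounded_op_cong_ae[OF R] bounded_op_cesaro_mean[OF P h] bounded_op_maps[OF P]
        cesaro_mean_in h bounded_op_maps[OF P h])
  also have "ae_eq M \<dots> (cesaro_mean K (\<lambda>m. ?R (P (h m))))"
    by (intro bounded_op_cesaro_mean[OF R] bounded_op_maps[OF P h])
  also have "ae_eq M \<dots> (cesaro_mean K (\<lambda>m x. (F x - (T ^^ Suc m) F x) + ?R (E m) x))"
  proof (intro ae_eq_cesaro_mean)
    fix m
    have "P (h m) = (\<lambda>x. ?G m x + E m x)" by (simp add: E_def)
    then have "ae_eq M (?R (P (h m))) (\<lambda>x. ?R (?G m) x + ?R (E m) x)"
      using bounded_op_add[OF R G E, of m m] by simp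
    also have "ae_eq M \<dots> (\<lambda>x. (F x - (T ^^ Suc m) F x) + ?R (E m) x)"
      by (intro ae_eq_add ae_eq_refl id_minus_geom_sum T F)
    finally show "ae_eq M (?R (P (h m))) (\<lambda>x. (F x - (T ^^ Suc m) F x) + ?R (E m) x)" .
  qed
  also have "cesaro_mean K (\<lambda>m x. (F x - (T ^^ Suc m) F x) + ?R (E m) x)
      = (\<lambda>x. F x - (?G K x - F x) / K + cesaro_mean K (\<lambda>m. ?R (E m)) x)"
  proof
    fix x
    have "(\<Sum>m<K. (F x - (T ^^ Suc m) F x) + ?R (E m) x)
        = K * F x - (?G K x - F x) + (\<Sum>m<K. ?R (E m) x)"
      by (simp only: sum.distrib sum_subtractf geom_sum_Suc_telescope) simp
    then show "cesaro_mean K (\<lambda>m x. (F x - (T ^^ Suc m) F x) + ?R (E m) x) x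
        = F x - (?G K x - F x) / K + cesaro_mean K (\<lambda>m. ?R (E m)) x"
      using \<open>0 < K\<close> by (simp add: cesaro_mean_def field_simps)
  qed
  finally show ?thesis by (simp add: E_def)
qed

text \<open>The induction step \<open>d \<mapsto> d + 1\<close>, with \<open>P = \<Prod>q<d. (I - A\<^sub>q)\<close> and \<open>T = A\<^sub>d\<close>.\<close>

lemma approximate_solution_step:
  assumes P: "bounded_op P" and T: "bounded_op T" and PT: "commuting P T" and F: "F \<in> V"
    and G_bound: "\<And>m. L2norm M (geom_sum T m F) \<le> B"
    and G_approx: "\<And>m e. e > 0 \<Longrightarrow>
      \<exists>h\<in>V. L2norm M h \<le> B \<and> L2norm M (\<lambda>x. P h x - geom_sum T m F x) \<le> e"
    and "e > 0"
  shows "\<exists>h\<in>V. L2norm M h \<le> B \<and> L2norm M (\<lambda>x. P (id_minus T h) x - F x) \<le> e"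
proof -
  let ?R = "id_minus T" and ?G = "\<lambda>m. geom_sum T m F"
  have R: "bounded_op ?R" by (rule bounded_op_minus[OF bounded_op_id T])
  obtain C where C: "0 \<le> C" "\<And>f. f \<in> V \<Longrightarrow> L2norm M (?R f) \<le> C * L2norm M f"
    using bounded_op_norm_le[OF R] by blast
  define e' where "e' = e / (2 * (C + 1))"
  have "0 < e'" using \<open>e > 0\<close> C(1) by (simp add: e'_def)
  then have "\<forall>m. \<exists>g. g \<in> V \<and> L2norm M g \<le> B \<and> L2norm M (\<lambda>x. P g x - ?G m x) \<le> e'"
    using G_approx by blast
  from choice[OF this] obtain h
    where "\<forall>m. h m \<in> V \<and> L2norm M (h m) \<le> B \<and> L2norm M (\<lambda>x. P (h m) x - ?G m x) \<le> e'"
    by blast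
  then have h: "\<And>m. h m \<in> V" "\<And>m. L2norm M (h m) \<le> B"
    and h_res: "\<And>m. L2norm M (\<lambda>x. P (h m) x - ?G m x) \<le> e'"
    by auto
  have "0 \<le> B" using G_bound[of 0] L2norm_nonneg[of M] by (meson order_trans)
  obtain K :: nat where K: "4 * B / e < K" using reals_Archimedean2 by blast
  moreover have "0 \<le> 4 * B / e" using \<open>0 \<le> B\<close> \<open>e > 0\<close> by simp
  ultimately have "0 < real K" by linarith
  then have "0 < K" by simp
  have G: "?G m \<in> V" for m by (rule geom_sum_in[OF T F])
  define E where "E = (\<lambda>m. ?R (\<lambda>x. P (h m) x - ?G m x))"
  have res_V: "(\<lambda>x. P (h m) x - ?G m x) \<in> V" for m
    by (intro subspace_diff bounded_op_maps[OF P] h G)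
  have E: "E m \<in> V" for m
    unfolding E_def by (intro bounded_op_maps[OF R] res_V)
  have E_norm: "L2norm M (E m) \<le> C * e'" for m
    unfolding E_def using C(2)[OF res_V] mult_left_mono[OF h_res C(1)] by (rule order_trans)
  have "ae_eq M (\<lambda>x. P (?R (cesaro_mean K h)) x - F x)
      (\<lambda>x. (F x - (?G K x - F x) / K + cesaro_mean K E x) - F x)"
    unfolding E_def
    by (rule ae_eq_diff[OF residual_cesaro_mean[OF P T PT F h(1) \<open>0 < K\<close>] ae_eq_refl])
  also have "(\<lambda>x. (F x - (?G K x - F x) / K + cesaro_mean K E x) - F x)
      = (\<lambda>x. cesaro_mean K E x - (1 / K) * (?G K x - F x))"
    by (simp add: fun_eq_iff)
  finally have "L2norm M (\<lambda>x. P (?R (cesaro_mean K h)) x - F x)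
      = L2norm M (\<lambda>x. cesaro_mean K E x - (1 / K) * (?G K x - F x))"
    by (intro L2norm_cong_ae_subspace subspace_diff subspace_cmult cesaro_mean_in
        bounded_op_maps[OF P] bounded_op_maps[OF R] h(1) E G F)
  also have "\<dots> \<le> L2norm M (cesaro_mean K E) + L2norm M (\<lambda>x. (1 / K) * (?G K x - F x))"
    by (intro L2norm_diff_le subspace_memL2 cesaro_mean_in subspace_cmult subspace_diff E G F)
  also have "\<dots> = L2norm M (cesaro_mean K E) + (1 / K) * L2norm M (\<lambda>x. ?G K x - F x)"
    by (simp only: L2norm_cmult) simp
  also have "\<dots> \<le> C * e' + (1 / K) * (2 * B)"
  proof (intro add_mono mult_left_mono)
    show "L2norm M (cesaro_mean K E) \<le> C * e'"
      by (rule L2norm_cesaro_mean_le[OF E E_norm \<open>0 < K\<close>])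
    have "L2norm M F \<le> B" using G_bound[of 0] by (simp add: geom_sum_def)
    then show "L2norm M (\<lambda>x. ?G K x - F x) \<le> 2 * B"
      using L2norm_diff_le[OF subspace_memL2[OF G[of K]] subspace_memL2[OF F]] G_bound[of K]
      by linarith
  qed simp
  also have "\<dots> \<le> e"
  proof -
    have "C * e' \<le> e / 2"
      using C(1) \<open>e > 0\<close> by (simp add: e'_def field_simps)
    moreover have "2 * B / K \<le> e / 2"
      using K \<open>0 < K\<close> \<open>e > 0\<close> by (simp add: field_simps)
    ultimately show ?thesis by simp
  qed
  finally have "L2norm M (\<lambda>x. P (?R (cesaro_mean K h)) x - F x) \<le> e" .
  moreover have "cesaro_mean K h \<in> V" by (intro cesaro_mean_in h)
  moreover have "L2norm M (cesaro_mean K h) \<le> B" by (intro L2norm_cesaro_mean_le h \<open>0 < K\<close>)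
  ultimately show ?thesis by blast
qed

end

section \<open>Sums over boxes of multi-indices\<close>

definition box_sum ::
  "(nat \<Rightarrow> ('b \<Rightarrow> real) \<Rightarrow> ('b \<Rightarrow> real)) \<Rightarrow> nat \<Rightarrow> (nat \<Rightarrow> nat) \<Rightarrow> ('b \<Rightarrow> real) \<Rightarrow> 'b \<Rightarrow> real"
  where "box_sum A d n F = (\<lambda>x. \<Sum>i\<in>Pi\<^sub>E {..<d} (\<lambda>q. {..n q}). mpow A d i F x)"

lemma mpow_cong: "(\<And>q. q < d \<Longrightarrow> i q = j q) \<Longrightarrow> mpow A d i = mpow A d j"
  by (induction d) auto

lemma box_sum_cong: "(\<And>q. q < d \<Longrightarrow> n q = n' q) \<Longrightarrow> box_sum A d n = box_sum A d n'"
  unfolding box_sum_def by (metis (no_types, lifting) PiE_cong lessThan_iff)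

lemma box_sum_zero_index: "box_sum A d (\<lambda>_. 0) F = F"
proof -
  have "Pi\<^sub>E {..<d} (\<lambda>q. {..0::nat}) = {\<lambda>q\<in>{..<d}. 0}"
    using ext_funcset_to_sing_iff[of "{..<d}" "0::nat"] by simp
  moreover have "mpow A d (\<lambda>q\<in>{..<d}. 0) = id"
    by (induction d) (auto cong: mpow_cong)
  ultimately show ?thesis unfolding box_sum_def by simp
qed

lemma box_sum_dim_0: "box_sum A 0 n F = F"
  by (simp add: box_sum_def)

lemma box_sum_Suc:
  "box_sum A (Suc d) n F
    = (\<lambda>x. \<Sum>i\<in>Pi\<^sub>E {..<d} (\<lambda>q. {..n q}). \<Sum>k\<le>n d. mpow A d i ((A d ^^ k) F) x)"
proof (rule ext)
  fix x
  let ?N = "\<lambda>q. {..n q}"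
  have "box_sum A (Suc d) n F x
      = (\<Sum>i\<in>(\<lambda>(k, i). i(d := k)) ` (?N d \<times> Pi\<^sub>E {..<d} ?N). mpow A (Suc d) i F x)"
    unfolding box_sum_def lessThan_Suc PiE_insert_eq by simp
  also have "\<dots> = (\<Sum>(k, i)\<in>?N d \<times> Pi\<^sub>E {..<d} ?N. mpow A (Suc d) (i(d := k)) F x)"
    by (subst sum.reindex[OF inj_combinator]) (auto simp: case_prod_beta)
  also have "\<dots> = (\<Sum>i\<in>Pi\<^sub>E {..<d} ?N. \<Sum>k\<in>?N d. mpow A (Suc d) (i(d := k)) F x)"
    by (subst sum.cartesian_product[symmetric]) (rule sum.swap)
  also have "\<dots> = (\<Sum>i\<in>Pi\<^sub>E {..<d} ?N. \<Sum>k\<le>n d. mpow A d i ((A d ^^ k) F) x)"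
    by (intro sum.cong refl) (simp cong: mpow_cong)
  finally show "box_sum A (Suc d) n F x = \<dots>" .
qed

locale commuting_L2_operators = L2_subspace +
  fixes A :: "nat \<Rightarrow> (('a \<Rightarrow> real) \<Rightarrow> ('a \<Rightarrow> real))" and D :: nat
  assumes bounded_A: "\<And>q. q < D \<Longrightarrow> bounded_linear_op_on M V (A q)"
    and commute_A: "\<And>p q f. p < D \<Longrightarrow> q < D \<Longrightarrow> f \<in> V \<Longrightarrow> ae_eq M (A p (A q f)) (A q (A p f))"
begin

lemma bounded_op_mpow: "d \<le> D \<Longrightarrow> bounded_op (mpow A d i)"
proof (induction d)
  case 0
  then show ?case using bounded_op_id by (simp add: id_def)
next
  case (Suc d)
  then show ?case
    by (simp only: mpow.simps) (intro bounded_op_comp bounded_op_funpow bounded_A; simp)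
qed

lemma box_sum_in: "d \<le> D \<Longrightarrow> F \<in> V \<Longrightarrow> box_sum A d n F \<in> V"
  unfolding box_sum_def
  by (intro subspace_sum bounded_op_maps[OF bounded_op_mpow]) (auto simp: finite_PiE)

lemma bounded_op_prod_I_minus: "d \<le> D \<Longrightarrow> bounded_op (prod_I_minus A d)"
proof (induction d)
  case 0
  then show ?case using bounded_op_id by (simp add: id_def)
next
  case (Suc d)
  then show ?case
    by (simp only: prod_I_minus.simps)
      (intro bounded_op_comp bounded_op_minus bounded_op_id bounded_A; simp)
qed

lemma commuting_prod_I_minus: "d' \<le> d \<Longrightarrow> d < D \<Longrightarrow> commuting (prod_I_minus A d') (A d)"
proof (induction d')
  case 0
  then show ?case using commuting_id by (simp add: id_def)
next
  case (Suc d')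
  have A_d': "bounded_op (A d')" and A_d: "bounded_op (A d)"
    using Suc.prems bounded_A by auto
  have "commuting (A d') (A d)"
    using Suc.prems commute_A unfolding commuting_def by auto
  then have "commuting (id_minus (A d')) (A d)"
    by (rule commuting_minus[OF bounded_op_id A_d' A_d commuting_id])
  then have "commuting (prod_I_minus A d' \<circ> id_minus (A d')) (A d)"
    using Suc by (intro commuting_comp bounded_op_prod_I_minus bounded_op_minus bounded_op_id
        A_d' A_d) auto
  then show ?case by (simp only: prod_I_minus.simps)
qed

lemma box_sum_Suc_ae:
  assumes "d < D" "F \<in> V"
  shows "ae_eq M (box_sum A (Suc d) n F) (box_sum A d n (geom_sum (A d) (n d) F))"
proof -
  have "ae_eq M (\<lambda>x. \<Sum>i\<in>Pi\<^sub>E {..<d} (\<lambda>q. {..n q}). \<Sum>k\<le>n d. mpow A d i ((A d ^^ k) F) x)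
      (\<lambda>x. \<Sum>i\<in>Pi\<^sub>E {..<d} (\<lambda>q. {..n q}). mpow A d i (geom_sum (A d) (n d) F) x)"
  proof (rule ae_eq_sum)
    fix i
    show "ae_eq M (\<lambda>x. \<Sum>k\<le>n d. mpow A d i ((A d ^^ k) F) x) (mpow A d i (geom_sum (A d) (n d) F))"
      unfolding geom_sum_def using assms
      by (intro ae_eq_sym[OF bounded_op_sum] bounded_op_mpow
          bounded_op_maps[OF bounded_op_funpow[OF bounded_A]]) auto
  qed (simp add: finite_PiE)
  then show ?thesis unfolding box_sum_Suc by (simp only: box_sum_def)
qed

text \<open>Summing the geometric sums in coordinate \<open>d\<close> over a box in the first \<open>d\<close> coordinates
  is summing over a box in \<open>d + 1\<close> coordinates.\<close>

lemma box_sum_geom_sum_bounded: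
  assumes d: "d < D" and F: "F \<in> V" and bound: "\<And>n. L2norm M (box_sum A (Suc d) n F) \<le> B"
  shows "L2norm M (box_sum A d n (geom_sum (A d) m F)) \<le> B"
proof -
  have "box_sum A d (n(d := m)) = box_sum A d n" by (rule box_sum_cong) simp
  then have "ae_eq M (box_sum A (Suc d) (n(d := m)) F) (box_sum A d n (geom_sum (A d) m F))"
    using box_sum_Suc_ae[OF d F, of "n(d := m)"] by simp
  moreover have "box_sum A (Suc d) (n(d := m)) F \<in> V"
    using d F by (intro box_sum_in) auto
  moreover have "box_sum A d n (geom_sum (A d) m F) \<in> V"
    using d F by (intro box_sum_in geom_sum_in bounded_A) auto
  ultimately show ?thesis
    using bound[of "n(d := m)"] L2norm_cong_ae_subspace by metis
qed

lemma approximate_solutions: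
  assumes "d \<le> D" "F \<in> V" "\<And>n. L2norm M (box_sum A d n F) \<le> B" "e > 0"
  shows "\<exists>h\<in>V. L2norm M h \<le> B \<and> L2norm M (\<lambda>x. prod_I_minus A d h x - F x) \<le> e"
  using assms
proof (induction d arbitrary: F e)
  case 0
  then show ?case by (intro bexI[of _ F]) (auto simp: box_sum_dim_0 L2norm_zero)
next
  case (Suc d)
  have d: "d < D" and A_d: "bounded_op (A d)" using Suc.prems bounded_A by auto
  have G_bound: "L2norm M (geom_sum (A d) m F) \<le> B" for m
    using box_sum_geom_sum_bounded[OF d Suc.prems(2,3), of "\<lambda>_. 0"]
    by (simp add: box_sum_zero_index)
  have G_approx: "\<exists>h\<in>V. L2norm M h \<le> B
      \<and> L2norm M (\<lambda>x. prod_I_minus A d h x - geom_sum (A d) m F x) \<le> e'" if "e' > 0" for m e'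
    using d that
    by (intro Suc.IH geom_sum_in[OF A_d Suc.prems(2)] box_sum_geom_sum_bounded[OF d Suc.prems(2,3)])
      auto
  have "\<exists>h\<in>V. L2norm M h \<le> B \<and> L2norm M (\<lambda>x. prod_I_minus A d (id_minus (A d) h) x - F x) \<le> e"
    using d by (intro approximate_solution_step[OF bounded_op_prod_I_minus A_d
        commuting_prod_I_minus[OF order_refl d] Suc.prems(2) G_bound G_approx Suc.prems(4)]) auto
  then show ?case by simp
qed

end

theorem mainTheorem9:
  fixes M :: "'a measure" and V :: "('a \<Rightarrow> real) set" and d :: nat
    and A :: "nat \<Rightarrow> (('a \<Rightarrow> real) \<Rightarrow> ('a \<Rightarrow> real))" and F :: "'a \<Rightarrow> real"
  assumes "prob_space M"
    and "closed_L2_subspace M V"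
    and "\<And>q. q < d \<Longrightarrow> bounded_linear_op_on M V (A q)"
    and "\<And>p q f. p < d \<Longrightarrow> q < d \<Longrightarrow> f \<in> V \<Longrightarrow> ae_eq M (A p (A q f)) (A q (A p f))"
    and "F \<in> V"
    and "\<exists>B. \<forall>n::nat \<Rightarrow> nat.
           L2norm M (\<lambda>x. \<Sum>i\<in>Pi\<^sub>E {..<d} (\<lambda>q. {..n q}). mpow A d i F x) \<le> B"
  shows "\<exists>h\<in>V. ae_eq M F (prod_I_minus A d h)"
proof -
  interpret commuting_L2_operators M V A d
    by (intro commuting_L2_operators.intro L2_subspace.intro
        commuting_L2_operators_axioms.intro assms)
  obtain B where B: "\<And>n. L2norm M (box_sum A d n F) \<le> B"
    using assms(6) unfolding box_sum_def by blast
  show ?thesis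
  proof (rule exact_solution_of_bounded_approximate_solutions)
    show "bounded_op (prod_I_minus A d)" by (rule bounded_op_prod_I_minus) simp
    fix e :: real
    assume "e > 0"
    then show "\<exists>h\<in>V. L2norm M h \<le> B \<and> L2norm M (\<lambda>x. prod_I_minus A d h x - F x) \<le> e"
      by (rule approximate_solutions[OF order_refl \<open>F \<in> V\<close> B])
  qed (rule \<open>F \<in> V\<close>)
qed

end
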